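(* Let $\mathcal{B}=\langle V,F,E\rangle$ be a finite bipartite graph and $W\subseteq V$ such that the subgraph of $\mathcal{B}$ induced by $(V\cup F)\setminus W$ is self-contained. Let $S=S_F\cup S_V$ be a cluster of the causal ordering graph $\mathrm{CO}(\mathcal{B})$ with $S\cap W=\emptyset$, where $S_F=S\cap F$ and $S_V=S\cap V$, and consider the perfect intervention $\mathrm{do}(S_F,S_V)$. Then the subgraph of $\mathcal{B}_{\mathrm{do}(S_F,S_V)}$ induced by $(V\cup F)\setminus W$ is self-contained.
   Context: $\mathrm{adj}_{\mathcal{B}}(X)$ is the set of vertices adjacent to some vertex of $X$. $F'\subseteq F$ is self-contained if $|F'|=|\mathrm{adj}_{\mathcal{B}}(F')|$ and $|F''|\le|\mathrm{adj}_{\mathcal{B}}(F'')|$ for all $F''\subseteq F'$; a bipartite graph is self-contained if both sides have equal size and the constraint side is self-contained; minimal self-contained = non-empty self-contained with no non-empty strict self-contained subset. Causal ordering graph $\mathrm{CO}(\mathcal{B})=\langle\mathcal{V},\mathcal{E}\rangle$ (Algorithm 1): start with $\mathcal{E}=\emptyset$, $\mathcal{V}=\{\{w\}:w\in W\}$, $\mathcal{B}'=\langle V',F',E'\rangle$ the subgraph induced by $(V\setminus W)\cup F$; while $\mathcal{B}'$ is non-null: choose a minimal self-contained set $S'_F$ of $\mathcal{B}'$, let $C=S'_F\cup\mathrm{adj}_{\mathcal{B}'}(S'_F)$, add $C$ to $\mathcal{V}$, add $v\to C$ for each $v\in\mathrm{adj}_{\mathcal{B}}(S'_F)\setminus\mathrm{adj}_{\mathcal{B}'}(S'_F)$,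 and replace $\mathcal{B}'$ by its subgraph induced by $(V'\cup F')\setminus C$. For such a cluster $S$ with $S\cap W=\emptyset$ one has $|S\cap F|=|S\cap V|=n$. Perfect intervention on the bipartite graph: enumerate $S_F=(f_1,\dots,f_n)$ and $S_V=(v_1,\dots,v_n)$; $\mathcal{B}_{\mathrm{do}(S_F,S_V)}=\langle V,F,E'\rangle$ where $E'$ consists of all edges of $E$ not incident to any $f_i$, together with the edges $(v_i-f_i)$, $i=1,\dots,n$. *)

theory Defs
  imports Main
begin

(* A bipartite graph <V,F,E> is represented by two disjoint vertex sets V, F
   and an edge set E \<subseteq> V \<times> F; an edge (v,f) is the edge v - f. *)

definition adj :: "('a \<times> 'a) set \<Rightarrow> 'a set \<Rightarrow> 'a set" where
  "adj E X = {y. \<exists>x\<in>X. (x, y) \<in> E \<or> (y, x) \<in> E}"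

definition induced_edges :: "('a \<times> 'a) set \<Rightarrow> 'a set \<Rightarrow> ('a \<times> 'a) set" where
  "induced_edges E U = E \<inter> (U \<times> U)"

definition self_contained_set :: "'a set \<Rightarrow> ('a \<times> 'a) set \<Rightarrow> 'a set \<Rightarrow> bool" where
  "self_contained_set F E F' \<longleftrightarrow>
     F' \<subseteq> F \<and> card F' = card (adj E F') \<and>
     (\<forall>F''. F'' \<subseteq> F' \<longrightarrow> card F'' \<le> card (adj E F''))"

definition self_contained_graph :: "'a set \<Rightarrow> 'a set \<Rightarrow> ('a \<times> 'a) set \<Rightarrow> bool" where
  "self_contained_graph V F E \<longleftrightarrow> card V = card F \<and> self_contained_set F E F"

definition minimal_self_contained :: "'a set \<Rightarrow> ('a \<times> 'a) set \<Rightarrow> 'a set \<Rightarrow> bool" where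
  "minimal_self_contained F E S \<longleftrightarrow>
     S \<noteq> {} \<and> self_contained_set F E S \<and>
     \<not> (\<exists>S'. S' \<noteq> {} \<and> S' \<subset> S \<and> self_contained_set F E S')"

(* Reachable states of Algorithm 1: the current graph B' is the subgraph of B
   induced by the vertex set U. *)
inductive co_state :: "'a set \<Rightarrow> 'a set \<Rightarrow> ('a \<times> 'a) set \<Rightarrow> 'a set \<Rightarrow> 'a set \<Rightarrow> bool"
  for V F E W where
  init: "co_state V F E W ((V - W) \<union> F)"
| step: "\<lbrakk> co_state V F E W U; U \<noteq> {};
          minimal_self_contained (F \<inter> U) (induced_edges E U) SF \<rbrakk>
        \<Longrightarrow> co_state V F E W (U - (SF \<union> adj (induced_edges E U) SF))"

(* C is a cluster (vertex) of the causal ordering graph CO(B) (for some run of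
   Algorithm 1): either a singleton {w}, w \<in> W, or a cluster
   S'_F \<union> adj_{B'}(S'_F) added in some iteration. *)
definition co_cluster :: "'a set \<Rightarrow> 'a set \<Rightarrow> ('a \<times> 'a) set \<Rightarrow> 'a set \<Rightarrow> 'a set \<Rightarrow> bool" where
  "co_cluster V F E W C \<longleftrightarrow>
     (\<exists>w\<in>W. C = {w}) \<or>
     (\<exists>U SF. co_state V F E W U \<and> U \<noteq> {} \<and>
        minimal_self_contained (F \<inter> U) (induced_edges E U) SF \<and>
        C = SF \<union> adj (induced_edges E U) SF)"

(* edges of B_do(S_F,S_V), where the enumeration pairs f with \<sigma> f *)
definition do_edges :: "('a \<times> 'a) set \<Rightarrow> 'a set \<Rightarrow> ('a \<Rightarrow> 'a) \<Rightarrow> ('a \<times> 'a) set" where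
  "do_edges E SF \<sigma> = {e \<in> E. snd e \<notin> SF} \<union> {(\<sigma> f, f) | f. f \<in> SF}"

end

theory Submission
  imports Defs
begin

text \<open>Once the two sides have equal size, a bipartite graph is self-contained exactly when its
  constraint side satisfies Hall's condition. Every state of Algorithm 1 satisfies Hall's condition,
  because each iteration removes a tight set of constraints together with its neighbourhood, and no
  state keeps a variable after discarding one of its constraints. After the intervention a set X of
  constraints splits into three parts: the part inside the cluster, matched injectively into the
  cluster variables; the part removed before the cluster was formed, whose neighbours lie outside
  the state at that time; and the part surviving the removal of the cluster. Their neighbourhoods
  are disjoint and each is large enough by Hall's condition at the corresponding stage.\<close>

definition hall_condition :: "('a \<times> 'a) set \<Rightarrow> 'a set \<Rightarrow> bool" where
  "hall_condition E X \<longleftrightarrow> (\<forall>Y\<subseteq>X. card Y \<le> card (adj E Y))"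

lemma hall_conditionD: "hall_condition E X \<Longrightarrow> Y \<subseteq> X \<Longrightarrow> card Y \<le> card (adj E Y)"
  unfolding hall_condition_def by blast

lemma self_contained_set_iff:
  "self_contained_set F E S \<longleftrightarrow> S \<subseteq> F \<and> card S = card (adj E S) \<and> hall_condition E S"
  unfolding self_contained_set_def hall_condition_def by blast

lemma minimal_self_contained_self_contained:
  "minimal_self_contained F E S \<Longrightarrow> self_contained_set F E S"
  unfolding minimal_self_contained_def by blast

lemma finite_adj: "finite E \<Longrightarrow> finite (adj E X)"
proof -
  assume "finite E"
  have "adj E X \<subseteq> fst ` E \<union> snd ` E"
    unfolding adj_def by force
  then show ?thesis
    using \<open>finite E\<close> by (meson finite_Un finite_imageI finite_subset)
qed

lemma adj_Un: "adj E (X \<union> Y) = adj E X \<union> adj E Y"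
  unfolding adj_def by blast

lemma adj_mono: "E \<subseteq> E' \<Longrightarrow> X \<subseteq> Y \<Longrightarrow> adj E X \<subseteq> adj E' Y"
  unfolding adj_def by blast

lemma adj_bipartite:
  assumes "E \<subseteq> V \<times> F" and "V \<inter> F = {}" and "X \<subseteq> F"
  shows "adj E X = {v. \<exists>x\<in>X. (v, x) \<in> E}"
  using assms unfolding adj_def by blast

lemma adj_bipartite_subset:
  "E \<subseteq> V \<times> F \<Longrightarrow> V \<inter> F = {} \<Longrightarrow> X \<subseteq> F \<Longrightarrow> adj E X \<subseteq> V"
  by (auto simp: adj_bipartite)

lemma induced_edges_subset: "E \<subseteq> A \<Longrightarrow> induced_edges E U \<subseteq> A"
  unfolding induced_edges_def by blast

lemma induced_edges_mono: "U \<subseteq> U' \<Longrightarrow> induced_edges E U \<subseteq> induced_edges E U'"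
  unfolding induced_edges_def by blast

lemma induced_edges_induced_edges [simp]:
  "induced_edges (induced_edges E A) B = induced_edges E (A \<inter> B)"
  unfolding induced_edges_def by blast

lemma finite_induced_edges: "finite E \<Longrightarrow> finite (induced_edges E U)"
  unfolding induced_edges_def by simp

lemma induced_edges_Diff_subset:
  "E \<subseteq> V \<times> F \<Longrightarrow> induced_edges E ((V \<union> F) - W) \<subseteq> (V - W) \<times> F"
  unfolding induced_edges_def by blast

lemma adj_induced_edges_subset: "adj (induced_edges E U) X \<subseteq> U"
  unfolding adj_def induced_edges_def by blast

lemma do_edges_subset:
  "E \<subseteq> V \<times> F \<Longrightarrow> SF \<subseteq> F \<Longrightarrow> \<sigma> ` SF \<subseteq> V \<Longrightarrow> do_edges E SF \<sigma> \<subseteq> V \<times> F"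
  unfolding do_edges_def by blast

lemma adj_induced_do_edges:
  assumes "E \<subseteq> V \<times> F" and "V \<inter> F = {}" and "X \<subseteq> F"
    and "SF \<subseteq> F \<inter> U" and "\<sigma> ` SF \<subseteq> V \<inter> U"
  shows "adj (induced_edges (do_edges E SF \<sigma>) U) X
    = \<sigma> ` (X \<inter> SF) \<union> adj (induced_edges E U) (X - SF)"
proof -
  have "induced_edges (do_edges E SF \<sigma>) U \<subseteq> V \<times> F"
    using assms by (intro induced_edges_subset do_edges_subset) auto
  then have "adj (induced_edges (do_edges E SF \<sigma>) U) X
      = {v. \<exists>x\<in>X. (v, x) \<in> induced_edges (do_edges E SF \<sigma>) U}"
    using assms(2,3) by (rule adj_bipartite)
  moreover have "adj (induced_edges E U) (X - SF) = {v. \<exists>x\<in>X - SF. (v, x) \<in> induced_edges E U}"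
    using induced_edges_subset[OF assms(1)] assms(2) by (rule adj_bipartite) (use assms(3) in blast)
  moreover have "(v, x) \<in> induced_edges (do_edges E SF \<sigma>) U \<longleftrightarrow>
      v \<in> U \<and> x \<in> U \<and> ((v, x) \<in> E \<and> x \<notin> SF \<or> x \<in> SF \<and> v = \<sigma> x)" for v x
    unfolding do_edges_def induced_edges_def by auto
  ultimately show ?thesis
    using assms(4,5) unfolding induced_edges_def by blast
qed

lemma card_Un_le_card_Un_disjoint:
  assumes "finite B" and "finite B'" and "B \<inter> B' = {}"
    and "card A \<le> card B" and "card A' \<le> card B'"
  shows "card (A \<union> A') \<le> card (B \<union> B')"
  using card_Un_le[of A A'] card_Un_disjoint[OF assms(1-3)] assms(4,5) by linarith

lemma self_contained_graph_iff_hall_condition: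
  assumes "E \<subseteq> V \<times> F" and "V \<inter> F = {}" and "finite V" and "card V = card F"
  shows "self_contained_graph V F E \<longleftrightarrow> hall_condition E F"
proof
  assume hall: "hall_condition E F"
  have "adj E F \<subseteq> V"
    using assms(1,2) by (rule adj_bipartite_subset) simp
  then have "card (adj E F) \<le> card F"
    using card_mono[OF \<open>finite V\<close>] assms(4) by simp
  moreover have "card F \<le> card (adj E F)"
    using hall by (rule hall_conditionD) simp
  ultimately show "self_contained_graph V F E"
    using assms(4) hall unfolding self_contained_graph_def self_contained_set_iff by simp
qed (simp add: self_contained_graph_def self_contained_set_iff)

lemma self_contained_graph_induced_iff_hall_condition:
  assumes "E \<subseteq> V \<times> F" and "V \<inter> F = {}" and "finite V" and "W \<subseteq> V"
    and "card (V - W) = card F"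
  shows "self_contained_graph (V - W) F (induced_edges E ((V \<union> F) - W))
    \<longleftrightarrow> hall_condition (induced_edges E ((V - W) \<union> F)) F"
proof -
  have "(V - W) \<inter> F = {}"
    using assms(2) by blast
  then have "self_contained_graph (V - W) F (induced_edges E ((V \<union> F) - W))
      \<longleftrightarrow> hall_condition (induced_edges E ((V \<union> F) - W)) F"
    using assms(1,3,5) by (intro self_contained_graph_iff_hall_condition induced_edges_Diff_subset) auto
  moreover have "(V \<union> F) - W = (V - W) \<union> F"
    using assms(2,4) by blast
  ultimately show ?thesis
    by simp
qed

lemma hall_condition_remove_tight:
  assumes "finite X" and "finite E" and hall: "hall_condition E X"
    and "S \<subseteq> X" and tight: "card S = card (adj E S)"
  shows "hall_condition (induced_edges E (- (S \<union> adj E S))) (X - (S \<union> adj E S))"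
  unfolding hall_condition_def
proof (intro allI impI)
  fix B assume B: "B \<subseteq> X - (S \<union> adj E S)"
  let ?E' = "induced_edges E (- (S \<union> adj E S))"
  have "finite S" "finite B"
    using \<open>finite X\<close> \<open>S \<subseteq> X\<close> B finite_subset by blast+
  then have "card S + card B = card (S \<union> B)"
    using B by (subst card_Un_disjoint) auto
  also have "\<dots> \<le> card (adj E (S \<union> B))"
    using \<open>S \<subseteq> X\<close> B by (intro hall_conditionD[OF hall]) blast
  also have "\<dots> \<le> card (adj E S \<union> adj ?E' B)"
  proof (rule card_mono)
    show "finite (adj E S \<union> adj ?E' B)"
      using \<open>finite E\<close> by (simp add: finite_adj finite_induced_edges)
    have "adj E B \<subseteq> adj E S \<union> adj ?E' B"
    proof
      fix y assume "y \<in> adj E B"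
      then obtain x where "x \<in> B" and xy: "(x, y) \<in> E \<or> (y, x) \<in> E"
        unfolding adj_def by blast
      show "y \<in> adj E S \<union> adj ?E' B"
      proof (cases "y \<in> S \<union> adj E S")
        case True
        moreover have "y \<notin> S" \<comment> \<open>otherwise \<open>x\<close> would be a neighbour of \<open>S\<close>\<close>
          using xy \<open>x \<in> B\<close> B unfolding adj_def by blast
        ultimately show ?thesis by blast
      next
        case False
        then have "(x, y) \<in> ?E' \<or> (y, x) \<in> ?E'"
          using xy \<open>x \<in> B\<close> B unfolding induced_edges_def by blast
        then show ?thesis
          using \<open>x \<in> B\<close> unfolding adj_def by blast
      qed
    qed
    then show "adj E (S \<union> B) \<subseteq> adj E S \<union> adj ?E' B"
      by (auto simp: adj_Un)
  qed
  also have "\<dots> \<le> card S + card (adj ?E' B)"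
    using card_Un_le tight by simp
  finally show "card B \<le> card (adj ?E' B)"
    by simp
qed

lemma hall_condition_remove_self_contained:
  assumes "finite E" and "finite F" and hall: "hall_condition (induced_edges E U) (F \<inter> U)"
    and "self_contained_set (F \<inter> U) (induced_edges E U) SF"
  defines "U' \<equiv> U - (SF \<union> adj (induced_edges E U) SF)"
  shows "hall_condition (induced_edges E U') (F \<inter> U')"
proof -
  let ?T = "SF \<union> adj (induced_edges E U) SF"
  have "hall_condition (induced_edges (induced_edges E U) (- ?T)) (F \<inter> U - ?T)"
    using assms(1,2,4) hall
    by (intro hall_condition_remove_tight) (auto simp: self_contained_set_iff finite_induced_edges)
  moreover have "U \<inter> - ?T = U'" "F \<inter> U - ?T = F \<inter> U'"
    unfolding U'_def by blast+
  ultimately show ?thesis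
    by simp
qed

lemma co_state_subset: "co_state V F E W U \<Longrightarrow> U \<subseteq> (V - W) \<union> F"
  by (induction rule: co_state.induct) auto

lemma co_state_edge_closed:
  assumes "E \<subseteq> V \<times> F" and "V \<inter> F = {}"
    and "co_state V F E W U" and "(v, f) \<in> E" and "v \<in> U"
  shows "f \<in> U"
  using assms(3-)
proof (induction arbitrary: v f rule: co_state.induct)
  case init
  then show ?case using assms(1) by blast
next
  case (step U SF)
  let ?N = "adj (induced_edges E U) SF"
  have SF: "SF \<subseteq> F \<inter> U"
    using minimal_self_contained_self_contained[OF step.hyps(3)] by (simp add: self_contained_set_iff)
  have N: "?N = {w. \<exists>x\<in>SF. (w, x) \<in> induced_edges E U}"
    using induced_edges_subset[OF assms(1)] assms(2) SF by (intro adj_bipartite) auto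
  have "f \<in> U"
    using step.IH step.prems by blast
  moreover have "f \<notin> ?N"
    using N assms(1,2) step.prems(1) unfolding induced_edges_def by blast
  moreover have "f \<notin> SF"
    using N \<open>f \<in> U\<close> step.prems unfolding induced_edges_def by blast
  ultimately show ?case
    by blast
qed

lemma co_state_hall_condition:
  assumes "finite E" and "finite F" and "hall_condition (induced_edges E ((V - W) \<union> F)) F"
    and "co_state V F E W U"
  shows "hall_condition (induced_edges E U) (F \<inter> U)"
  using assms(4)
proof (induction rule: co_state.induct)
  case init
  then show ?case using assms(3) by simp
next
  case (step U SF)
  then show ?case
    using assms(1,2) minimal_self_contained_self_contained
    by (blast intro: hall_condition_remove_self_contained)
qed

lemma co_cluster_disjoint:
  assumes "E \<subseteq> V \<times> F" and "V \<inter> F = {}"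
    and "co_cluster V F E W S" and "S \<inter> W = {}"
  obtains U SF where "co_state V F E W U"
    and "self_contained_set (F \<inter> U) (induced_edges E U) SF"
    and "S \<inter> F = SF" and "S \<inter> V = adj (induced_edges E U) SF"
proof -
  obtain U SF where st: "co_state V F E W U"
    and msc: "minimal_self_contained (F \<inter> U) (induced_edges E U) SF"
    and S: "S = SF \<union> adj (induced_edges E U) SF"
    using assms(3,4) unfolding co_cluster_def by blast
  have sc: "self_contained_set (F \<inter> U) (induced_edges E U) SF"
    using msc by (rule minimal_self_contained_self_contained)
  then have "SF \<subseteq> F"
    by (simp add: self_contained_set_iff)
  moreover have "adj (induced_edges E U) SF \<subseteq> V"
    using induced_edges_subset[OF assms(1)] assms(2) \<open>SF \<subseteq> F\<close>
    by (rule adj_bipartite_subset)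
  ultimately have "S \<inter> F = SF" "S \<inter> V = adj (induced_edges E U) SF"
    using S assms(2) by blast+
  with st sc show thesis
    by (rule that)
qed

lemma adj_Diff_disjoint:
  assumes "E \<subseteq> V \<times> F" and "V \<inter> F = {}" and "X \<subseteq> F"
    and closed: "\<And>v f. (v, f) \<in> E \<Longrightarrow> v \<in> U \<Longrightarrow> f \<in> U"
  shows "adj (induced_edges E U0) (X - U) \<inter> U = {}"
proof -
  have "adj (induced_edges E U0) (X - U) = {v. \<exists>x\<in>X - U. (v, x) \<in> induced_edges E U0}"
    using induced_edges_subset[OF assms(1)] assms(2) by (rule adj_bipartite) (use assms(3) in blast)
  then show ?thesis
    using closed unfolding induced_edges_def by blast
qed

lemma hall_condition_do_edges:
  assumes bip: "E \<subseteq> V \<times> F" and disj: "V \<inter> F = {}" and "finite E" and "finite F"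
    and "U \<subseteq> U0" and closed: "\<And>v f. (v, f) \<in> E \<Longrightarrow> v \<in> U \<Longrightarrow> f \<in> U"
    and SF: "SF \<subseteq> F \<inter> U" and N: "N \<subseteq> V \<inter> U" and bij: "bij_betw \<sigma> SF N"
    and hall0: "hall_condition (induced_edges E U0) F"
    and hall': "hall_condition (induced_edges E (U - (SF \<union> N))) (F \<inter> (U - (SF \<union> N)))"
  shows "hall_condition (induced_edges (do_edges E SF \<sigma>) U0) F"
  unfolding hall_condition_def
proof (intro allI impI)
  fix X assume "X \<subseteq> F"
  define U' where "U' = U - (SF \<union> N)"
  define P where "P = \<sigma> ` (X \<inter> SF)"
  define Q where "Q = adj (induced_edges E U0) (X - U)"
  define R where "R = adj (induced_edges E U') (X \<inter> U')"
  have "finite SF"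
    using SF \<open>finite F\<close> finite_subset by blast
  have "Q \<inter> U = {}"
    unfolding Q_def using bip disj \<open>X \<subseteq> F\<close> closed by (rule adj_Diff_disjoint)
  moreover have "P \<subseteq> N"
    unfolding P_def using bij by (auto simp: bij_betw_def)
  moreover have "R \<subseteq> U'"
    unfolding R_def by (rule adj_induced_edges_subset)
  ultimately have disjoint: "P \<inter> Q = {}" "(P \<union> Q) \<inter> R = {}"
    using N unfolding U'_def by blast+
  have "X = (X \<inter> SF) \<union> (X - U) \<union> (X \<inter> U')"
    using \<open>X \<subseteq> F\<close> N disj unfolding U'_def by blast
  also have "card \<dots> \<le> card (P \<union> Q \<union> R)"
  proof (intro card_Un_le_card_Un_disjoint disjoint)
    show "card (X \<inter> SF) \<le> card P"
      unfolding P_def using inj_on_subset[OF bij_betw_imp_inj_on[OF bij]] by (simp add: card_image)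
    show "card (X - U) \<le> card Q"
      unfolding Q_def using \<open>X \<subseteq> F\<close> by (intro hall_conditionD[OF hall0]) blast
    show "card (X \<inter> U') \<le> card R"
      unfolding R_def U'_def using \<open>X \<subseteq> F\<close> by (intro hall_conditionD[OF hall']) blast
    show "finite P" "finite Q" "finite R" "finite (P \<union> Q)"
      using \<open>finite SF\<close> \<open>finite E\<close> by (auto simp: P_def Q_def R_def finite_adj finite_induced_edges)
  qed
  also have "\<dots> \<le> card (adj (induced_edges (do_edges E SF \<sigma>) U0) X)"
  proof (rule card_mono)
    have adj: "adj (induced_edges (do_edges E SF \<sigma>) U0) X = P \<union> adj (induced_edges E U0) (X - SF)"
      unfolding P_def using bip disj \<open>X \<subseteq> F\<close>
      by (rule adj_induced_do_edges) (use SF N bij_betw_imp_surj_on[OF bij] \<open>U \<subseteq> U0\<close> in blast)+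
    then show "finite (adj (induced_edges (do_edges E SF \<sigma>) U0) X)"
      using \<open>finite SF\<close> \<open>finite E\<close> by (simp add: P_def finite_adj finite_induced_edges)
    have "induced_edges E U' \<subseteq> induced_edges E U0"
      using \<open>U \<subseteq> U0\<close> unfolding U'_def by (intro induced_edges_mono) blast
    moreover have "X - U \<subseteq> X - SF" "X \<inter> U' \<subseteq> X - SF"
      using SF unfolding U'_def by blast+
    ultimately have "Q \<union> R \<subseteq> adj (induced_edges E U0) (X - SF)"
      unfolding Q_def R_def by (intro Un_least adj_mono order_refl)
    then show "P \<union> Q \<union> R \<subseteq> adj (induced_edges (do_edges E SF \<sigma>) U0) X"
      unfolding adj by blast
  qed
  finally show "card X \<le> card (adj (induced_edges (do_edges E SF \<sigma>) U0) X)" .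
qed

theorem lemma22:
  fixes V F W S :: "'a set" and E :: "('a \<times> 'a) set" and \<sigma> :: "'a \<Rightarrow> 'a"
  assumes "finite V" and "finite F" and "V \<inter> F = {}" and "E \<subseteq> V \<times> F"
    and "W \<subseteq> V"
    and "self_contained_graph (V - W) F (induced_edges E ((V \<union> F) - W))"
    and "co_cluster V F E W S" and "S \<inter> W = {}"
    and "bij_betw \<sigma> (S \<inter> F) (S \<inter> V)"
  shows "self_contained_graph (V - W) F
           (induced_edges (do_edges E (S \<inter> F) \<sigma>) ((V \<union> F) - W))"
proof -
  note bip = assms(4) and disj = assms(3)
  have "finite E"
    using assms(1,2) bip finite_subset by blast
  have "card (V - W) = card F"
    using assms(6) unfolding self_contained_graph_def ..
  note hall_iff = self_contained_graph_induced_iff_hall_condition[OF _ disj assms(1,5) this]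
  obtain U SF where st: "co_state V F E W U"
    and sc: "self_contained_set (F \<inter> U) (induced_edges E U) SF"
    and SF: "S \<inter> F = SF" and N: "S \<inter> V = adj (induced_edges E U) SF"
    using co_cluster_disjoint[OF bip disj assms(7,8)] .
  have hall0: "hall_condition (induced_edges E ((V - W) \<union> F)) F"
    using assms(6) hall_iff[OF bip] by blast
  have "hall_condition (induced_edges (do_edges E SF \<sigma>) ((V - W) \<union> F)) F"
  proof (rule hall_condition_do_edges[OF bip disj \<open>finite E\<close> assms(2)])
    show "SF \<subseteq> F \<inter> U"
      using sc by (simp add: self_contained_set_iff)
    show "S \<inter> V \<subseteq> V \<inter> U"
      using N adj_induced_edges_subset[of E U SF] by blast
    show "hall_condition (induced_edges E (U - (SF \<union> S \<inter> V))) (F \<inter> (U - (SF \<union> S \<inter> V)))"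
      unfolding N using \<open>finite E\<close> assms(2) co_state_hall_condition[OF \<open>finite E\<close> assms(2) hall0 st] sc
      by (rule hall_condition_remove_self_contained)
  qed (use assms(9) SF co_state_subset[OF st] co_state_edge_closed[OF bip disj st] hall0 in auto)
  moreover have "do_edges E SF \<sigma> \<subseteq> V \<times> F"
    using assms(9) SF by (intro do_edges_subset[OF bip]) (auto simp: bij_betw_def)
  ultimately show ?thesis
    unfolding SF using hall_iff by blast
qed

end
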